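(* Let $u\in\mathbb{N}$, $u\geq 2$, let $l_1,\dots,l_u$ be non-negative integers, and let $M:=\max\{l_j:j=1,\dots,u\}$. Then the minimal value $K$ for which there exists a well distributing matrix $\mathcal{K}\in\{0,1\}^{u\times K}$ is $$\max\Bigl\{M,\Bigl\lceil\tfrac{1}{u-1}\sum_{i=1}^u l_i\Bigr\rceil\Bigr\}.$$
   Context: Given $u,K\in\mathbb{N}$ and non-negative integers $l_1,\dots,l_u$, a matrix $\mathcal{K}\in\{0,1\}^{u\times K}$ is well distributing if (i) $\sum_{j=1}^K\mathcal{K}_{i,j}=l_i$ for all $i=1,\dots,u$, and (ii) $1\le\sum_{i=1}^u\mathcal{K}_{i,j}\le u-1$ for all $j=1,\dots,K$. *)

theory Defs
  imports Complex_Main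
begin

text \<open>A u x K matrix with entries in {0,1}, indexed by rows 1..u and columns 1..K.
  Entries outside this range are irrelevant.\<close>
definition well_distributing :: "nat \<Rightarrow> (nat \<Rightarrow> nat) \<Rightarrow> nat \<Rightarrow> (nat \<Rightarrow> nat \<Rightarrow> nat) \<Rightarrow> bool" where
  "well_distributing u l K A \<longleftrightarrow>
     (\<forall>i\<in>{1..u}. \<forall>j\<in>{1..K}. A i j \<in> {0, 1}) \<and>
     (\<forall>i\<in>{1..u}. (\<Sum>j=1..K. A i j) = l i) \<and>
     (\<forall>j\<in>{1..K}. 1 \<le> (\<Sum>i=1..u. A i j) \<and> (\<Sum>i=1..u. A i j) \<le> u - 1)"

end

theory Submission
  imports Defs
begin

text \<open>Counting the ones of a well distributing \<open>u \<times> K\<close> matrix by rows and by columns gives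
  \<open>l i \<le> K\<close> and \<open>K \<le> S \<le> K (u - 1)\<close> for \<open>S = \<Sum>l\<close>. Conversely, under these conditions
  number the ones of rows \<open>1, \<dots>, u\<close> consecutively by \<open>0, \<dots>, S - 1\<close> and deal them round
  robin, the \<open>t\<close>-th one into column \<open>t mod K\<close>. A row has at most \<open>K\<close> consecutive numbers, so
  it never hits a column twice, and each column receives \<open>\<lfloor>S/K\<rfloor>\<close> or \<open>\<lceil>S/K\<rceil>\<close> ones, which
  lies between \<open>1\<close> and \<open>u - 1\<close>.\<close>

lemma card_residue_class_short_interval_le_1:
  fixes K :: nat
  assumes "n \<le> K"
  shows "card {t \<in> {a..<a + n}. t mod K = r} \<le> 1"
proof -
  have "x = y" if "x \<in> {t \<in> {a..<a + n}. t mod K = r}" "y \<in> {t \<in> {a..<a + n}. t mod K = r}"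
    "x \<le> y" for x y
  proof -
    have "K dvd y - x" using that mod_eq_dvd_iff_nat[of x y K] by auto
    moreover have "y - x < K" using that assms by auto
    ultimately show "x = y" using \<open>x \<le> y\<close> by auto
  qed
  then have "\<forall>x\<in>{t \<in> {a..<a + n}. t mod K = r}. \<forall>y\<in>{t \<in> {a..<a + n}. t mod K = r}. x = y"
    using nat_le_linear by blast
  then show ?thesis by (simp add: card_le_Suc0_iff_eq)
qed

lemma sum_card_residue_classes:
  fixes K :: nat
  assumes "finite A" "0 < K"
  shows "(\<Sum>r<K. card {t \<in> A. t mod K = r}) = card A"
proof -
  have "card A = card (\<Union>r<K. {t \<in> A. t mod K = r})"
    using assms(2) by (intro arg_cong[of _ _ card]) auto
  also have "\<dots> = (\<Sum>r<K. card {t \<in> A. t mod K = r})"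
    by (rule card_UN_disjoint) (use assms(1) in auto)
  finally show ?thesis by simp
qed

lemma card_residue_class_lessThan_le:
  fixes K :: nat
  assumes "S \<le> K * m"
  shows "card {t \<in> {..<S}. t mod K = r} \<le> m"
proof -
  have "inj_on (\<lambda>t. t div K) {t \<in> {..<S}. t mod K = r}"
  proof (rule inj_onI)
    fix x y
    assume "x \<in> {t \<in> {..<S}. t mod K = r}" "y \<in> {t \<in> {..<S}. t mod K = r}" "x div K = y div K"
    then have "x mod K = y mod K" "x div K = y div K" by simp_all
    then show "x = y" using div_mult_mod_eq by metis
  qed
  moreover have "(\<lambda>t. t div K) ` {t \<in> {..<S}. t mod K = r} \<subseteq> {..<m}"
  proof (rule image_subsetI)
    fix t assume "t \<in> {t \<in> {..<S}. t mod K = r}"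
    then have "t < m * K" using assms by (simp add: mult.commute)
    then show "t div K \<in> {..<m}" by (simp add: less_mult_imp_div_less)
  qed
  ultimately show ?thesis using card_inj_on_le[OF _ _ finite_lessThan] by fastforce
qed

lemma card_residue_class_lessThan_ge_1:
  fixes K :: nat
  assumes "r < K" "K \<le> S"
  shows "1 \<le> card {t \<in> {..<S}. t mod K = r}"
proof -
  have "r \<in> {t \<in> {..<S}. t mod K = r}" using assms by auto
  then show ?thesis by (auto simp: Suc_le_eq card_gt_0_iff)
qed

lemma sum_card_filter_consecutive_intervals:
  fixes P :: "nat \<Rightarrow> nat"
  assumes "mono P" "m \<le> n"
  shows "(\<Sum>i\<in>{m..<n}. card {t \<in> {P i..<P (Suc i)}. Q t}) = card {t \<in> {P m..<P n}. Q t}"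
  using assms(2)
proof (induction n rule: dec_induct)
  case base
  then show ?case by simp
next
  case (step n)
  have "P m \<le> P n" "P n \<le> P (Suc n)" using monoD[OF assms(1)] step.hyps by simp_all
  then have "{t \<in> {P m..<P (Suc n)}. Q t} = {t \<in> {P m..<P n}. Q t} \<union> {t \<in> {P n..<P (Suc n)}. Q t}"
    by auto
  moreover have "card \<dots> = card {t \<in> {P m..<P n}. Q t} + card {t \<in> {P n..<P (Suc n)}. Q t}"
    by (rule card_Un_disjoint) auto
  ultimately show ?case using step.IH step.hyps by simp
qed

lemma well_distributing_row_le:
  assumes "well_distributing u l K A" "i \<in> {1..u}"
  shows "l i \<le> K"
proof -
  have "(\<Sum>j=1..K. A i j) \<le> (\<Sum>j=1..K. 1)"
    using assms unfolding well_distributing_def by (intro sum_mono) fastforce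
  then show ?thesis using assms unfolding well_distributing_def by simp
qed

lemma well_distributing_total_bounds:
  assumes "well_distributing u l K A"
  shows "K \<le> (\<Sum>i=1..u. l i)" "(\<Sum>i=1..u. l i) \<le> K * (u - 1)"
proof -
  have "(\<Sum>i=1..u. l i) = (\<Sum>i=1..u. \<Sum>j=1..K. A i j)"
    using assms unfolding well_distributing_def by simp
  also have "\<dots> = (\<Sum>j=1..K. \<Sum>i=1..u. A i j)" by (rule sum.swap)
  finally have total: "(\<Sum>i=1..u. l i) = (\<Sum>j=1..K. \<Sum>i=1..u. A i j)" .
  have "(\<Sum>j=1..K. 1) \<le> (\<Sum>j=1..K. \<Sum>i=1..u. A i j)"
    using assms unfolding well_distributing_def by (intro sum_mono) auto
  then show "K \<le> (\<Sum>i=1..u. l i)" using total by simp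
  have "(\<Sum>j=1..K. \<Sum>i=1..u. A i j) \<le> (\<Sum>j=1..K. u - 1)"
    using assms unfolding well_distributing_def by (intro sum_mono) auto
  then show "(\<Sum>i=1..u. l i) \<le> K * (u - 1)" using total by simp
qed

lemma well_distributing_exists:
  assumes "\<forall>i\<in>{1..u}. l i \<le> K" "K \<le> (\<Sum>i=1..u. l i)" "(\<Sum>i=1..u. l i) \<le> K * (u - 1)"
  shows "\<exists>A. well_distributing u l K A"
proof (cases "K = 0")
  case True
  then show ?thesis using assms(1) unfolding well_distributing_def
    by (intro exI[of _ "\<lambda>_ _. 0"]) auto
next
  case False
  define S where "S = (\<Sum>i=1..u. l i)"
  define P where "P i = (\<Sum>k=1..<i. l k)" for i
  have P_Suc: "P (Suc i) = P i + l i" if "1 \<le> i" for i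
    unfolding P_def using that by simp
  have P_first: "P 1 = 0"
    unfolding P_def by simp
  have "mono P"
    unfolding P_def by (intro monoI sum_mono2) auto
  have P_last: "P (Suc u) = S"
    unfolding P_def S_def by (simp only: atLeastLessThanSuc_atLeastAtMost)
  define A where "A i j = card {t \<in> {P i..<P i + l i}. t mod K = j - 1}" for i j
  have "A i j \<le> 1" if "i \<in> {1..u}" for i j
    unfolding A_def using assms(1) that by (intro card_residue_class_short_interval_le_1) auto
  moreover have "(\<Sum>j=1..K. A i j) = l i" for i
    using sum_card_residue_classes[of "{P i..<P i + l i}" K] False
    by (simp add: A_def sum.atLeast1_atMost_eq)
  moreover have column: "(\<Sum>i=1..u. A i j) = card {t \<in> {..<S}. t mod K = j - 1}" for j
  proof -
    have "(\<Sum>i=1..u. A i j) = (\<Sum>i\<in>{1..<Suc u}. card {t \<in> {P i..<P (Suc i)}. t mod K = j - 1})"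
      unfolding A_def atLeastLessThanSuc_atLeastAtMost by (intro sum.cong) (auto simp: P_Suc)
    also have "\<dots> = card {t \<in> {P 1..<P (Suc u)}. t mod K = j - 1}"
      by (rule sum_card_filter_consecutive_intervals[OF \<open>mono P\<close>]) simp
    finally show ?thesis unfolding P_first P_last atLeast0LessThan .
  qed
  moreover have "1 \<le> (\<Sum>i=1..u. A i j) \<and> (\<Sum>i=1..u. A i j) \<le> u - 1" if "j \<in> {1..K}" for j
  proof -
    have "j - 1 < K" "K \<le> S" "S \<le> K * (u - 1)" using that assms(2,3) by (auto simp: S_def)
    then show ?thesis unfolding column
      using card_residue_class_lessThan_ge_1 card_residue_class_lessThan_le by blast
  qed
  ultimately show ?thesis unfolding well_distributing_def
    by (intro exI[of _ A]) (auto simp: le_Suc_eq)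
qed

lemma well_distributing_exists_iff:
  "(\<exists>A. well_distributing u l K A) \<longleftrightarrow>
     (\<forall>i\<in>{1..u}. l i \<le> K) \<and> K \<le> (\<Sum>i=1..u. l i) \<and> (\<Sum>i=1..u. l i) \<le> K * (u - 1)"
  using well_distributing_row_le well_distributing_total_bounds well_distributing_exists by blast

lemma nat_ceiling_divide_le_iff:
  fixes S d K :: nat
  assumes "0 < d"
  shows "nat \<lceil>real S / real d\<rceil> \<le> K \<longleftrightarrow> S \<le> K * d"
proof -
  have "nat \<lceil>real S / real d\<rceil> \<le> K \<longleftrightarrow> real S \<le> real K * real d"
    using assms by (simp add: divide_le_eq)
  also have "\<dots> \<longleftrightarrow> S \<le> K * d" by (metis of_nat_le_iff of_nat_mult)
  finally show ?thesis .
qed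

theorem lemma9:
  fixes u :: nat and l :: "nat \<Rightarrow> nat"
  assumes "u \<ge> 2"
  defines "M \<equiv> Max (l ` {1..u})"
  defines "K0 \<equiv> max M (nat \<lceil>real (\<Sum>i=1..u. l i) / real (u - 1)\<rceil>)"
  shows "(\<exists>A. well_distributing u l K0 A) \<and>
         (\<forall>K A. well_distributing u l K A \<longrightarrow> K0 \<le> K)"
proof -
  define S where "S = (\<Sum>i=1..u. l i)"
  have u1: "0 < u - 1" using assms(1) by simp
  have M_le_iff: "M \<le> K \<longleftrightarrow> (\<forall>i\<in>{1..u}. l i \<le> K)" for K
    unfolding M_def using assms(1) by (subst Max_le_iff) auto
  have K0_le_iff: "K0 \<le> K \<longleftrightarrow> (\<forall>i\<in>{1..u}. l i \<le> K) \<and> S \<le> K * (u - 1)" for K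
    unfolding K0_def S_def[symmetric] max.bounded_iff M_le_iff nat_ceiling_divide_le_iff[OF u1] ..
  have "K0 \<le> S"
    unfolding K0_le_iff using u1 by (auto simp: S_def member_le_sum)
  then have "\<exists>A. well_distributing u l K0 A"
    using K0_le_iff[of K0] unfolding well_distributing_exists_iff S_def by simp
  moreover have "K0 \<le> K" if "well_distributing u l K A" for K A
    using that K0_le_iff well_distributing_exists_iff[of u l K] unfolding S_def by blast
  ultimately show ?thesis by blast
qed

end
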